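(* Let $R$ be a domain, $m\geqslant 2$, and let $G$ be a finite undirected graph without loops with vertex set $A=\{a_1,\dots,a_n\}$, $n\geqslant 2$, such that the complement graph $\overline{G}$ is connected. Suppose the partially commutative nilpotent Lie algebra $\mathcal{N}_m(A;G)=L_1\oplus L_2$ is a direct sum of two subalgebras such that for every $i\in\{1,\dots,n\}$ we have $(a_i)_1=a_i+g_i$ and $(a_i)_2=-g_i$ with $g_i\in\mathcal{N}_m(A;G)$ and $a_i\notin\mathrm{supp}(\omega_1(g_i))$. Then $O_{m-1}(g_i)=0$ for all $i\in\{1,\dots,n\}$.
   Context: All Lie algebras are over the domain $R$. The complement graph $\overline{G}$ has vertex set $A$, with distinct vertices adjacent iff they are not adjacent in $G$. $\mathcal{N}_m(A;G)$ is the Lie $R$-algebra presented in the variety of nilpotent Lie algebras of degree $m$ (all Lie products of $m+1$ elements vanish) by generators $A$ and relations $[a_p,a_q]=0$ for all edges $\{a_p,a_q\}$ of $G$. Since relations and identities are multi-homogeneous, every element $h$ is uniquely a sum of nonzero multi-homogeneous components (multi-degree of a Lie monomial = vector counting occurrences of each $a_p$; its length is the sum of the entries). $\mathrm{supp}(h)$ is the set of $a_p$ occurring with nonzero exponent in the multi-degree of some component of $h$; $\omega_k(h)$ is the sum of the components of length $k$ and $O_k(h)=\sum_{j=1}^k\omega_j(h)$. A direct sum $L=L_1\oplus L_2$ of subalgebras means $L_1,L_2$ are subalgebras, $L=L_1\oplus L_2$ as $R$-modules and $[L_1,L_2]=0$; for $h\in L$, $(h)_1\in L_1$, $(h)_2\in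 L_2$ are the unique elements with $h=(h)_1+(h)_2$. *)

theory Defs
  imports Main "HOL-Library.Poly_Mapping"
begin

text \<open>Lie monomials (non-associative words) over the generator set, i.e. elements
  of the free magma on the vertex type 'a.\<close>
datatype 'a ltree = Leaf 'a | Br "'a ltree" "'a ltree"

fun tlen :: "'a ltree \<Rightarrow> nat" where
  "tlen (Leaf a) = 1"
| "tlen (Br s t) = tlen s + tlen t"

fun mdeg :: "'a ltree \<Rightarrow> 'a \<Rightarrow> nat" where
  "mdeg (Leaf a) = (\<lambda>p. if p = a then 1 else 0)"
| "mdeg (Br s t) = (\<lambda>p. mdeg s p + mdeg t p)"

text \<open>Elements of the free non-associative R-algebra on 'a: finitely supported
  R-linear combinations of Lie monomials.  Elements of N_m(A;G) are represented
  by such elements modulo the ideal lideal below.\<close>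
type_synonym ('a,'r) nael = "'a ltree \<Rightarrow>\<^sub>0 'r"

definition gen :: "'a \<Rightarrow> ('a,'r::comm_ring_1) nael" where
  "gen a = Poly_Mapping.single (Leaf a) 1"

definition smul :: "'r::comm_ring_1 \<Rightarrow> ('a,'r) nael \<Rightarrow> ('a,'r) nael" where
  "smul c x = Poly_Mapping.map (\<lambda>y. c * y) x"

definition br :: "('a,'r::comm_ring_1) nael \<Rightarrow> ('a,'r) nael \<Rightarrow> ('a,'r) nael" where
  "br x y = (\<Sum>s\<in>Poly_Mapping.keys x. \<Sum>t\<in>Poly_Mapping.keys y.
              Poly_Mapping.single (Br s t) (Poly_Mapping.lookup x s * Poly_Mapping.lookup y t))"

text \<open>The ideal of the free non-associative algebra whose quotient is
  N_m(A;G): generated by the Lie identities (alternating law, Jacobi), the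
  nilpotency identities of degree m (all monomials of length > m) and the
  defining relations [a_p,a_q] for edges of G.\<close>
inductive_set lideal :: "nat \<Rightarrow> ('a \<Rightarrow> 'a \<Rightarrow> bool) \<Rightarrow> ('a,'r::comm_ring_1) nael set"
  for m :: nat and E :: "'a \<Rightarrow> 'a \<Rightarrow> bool" where
  alt: "br x x \<in> lideal m E"
| jac: "br x (br y z) + br y (br z x) + br z (br x y) \<in> lideal m E"
| nil: "tlen t > m \<Longrightarrow> Poly_Mapping.single t 1 \<in> lideal m E"
| rel: "E p q \<Longrightarrow> br (gen p) (gen q) \<in> lideal m E"
| zero: "0 \<in> lideal m E"
| add: "x \<in> lideal m E \<Longrightarrow> y \<in> lideal m E \<Longrightarrow> x + y \<in> lideal m E"
| smul: "x \<in> lideal m E \<Longrightarrow> smul c x \<in> lideal m E"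
| brl: "x \<in> lideal m E \<Longrightarrow> br x y \<in> lideal m E"
| brr: "x \<in> lideal m E \<Longrightarrow> br y x \<in> lideal m E"

definition Neq :: "nat \<Rightarrow> ('a \<Rightarrow> 'a \<Rightarrow> bool) \<Rightarrow> ('a,'r::comm_ring_1) nael \<Rightarrow> ('a,'r) nael \<Rightarrow> bool" where
  "Neq m E x y \<longleftrightarrow> x - y \<in> lideal m E"

text \<open>A subalgebra of N_m(A;G), given as the (saturated) set of its representatives.\<close>
definition Nsubalg :: "nat \<Rightarrow> ('a \<Rightarrow> 'a \<Rightarrow> bool) \<Rightarrow> ('a,'r::comm_ring_1) nael set \<Rightarrow> bool" where
  "Nsubalg m E S \<longleftrightarrow>
     (\<forall>x y. x \<in> S \<longrightarrow> Neq m E x y \<longrightarrow> y \<in> S) \<and> 0 \<in> S \<and>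
     (\<forall>x\<in>S. \<forall>y\<in>S. x + y \<in> S \<and> br x y \<in> S) \<and> (\<forall>c. \<forall>x\<in>S. smul c x \<in> S)"

definition Ndirect_sum :: "nat \<Rightarrow> ('a \<Rightarrow> 'a \<Rightarrow> bool) \<Rightarrow> ('a,'r::comm_ring_1) nael set \<Rightarrow> ('a,'r) nael set \<Rightarrow> bool" where
  "Ndirect_sum m E L1 L2 \<longleftrightarrow>
     Nsubalg m E L1 \<and> Nsubalg m E L2 \<and>
     (\<forall>h. \<exists>u\<in>L1. \<exists>v\<in>L2. Neq m E h (u + v)) \<and>
     (\<forall>x. x \<in> L1 \<longrightarrow> x \<in> L2 \<longrightarrow> Neq m E x 0) \<and>
     (\<forall>u\<in>L1. \<forall>v\<in>L2. Neq m E (br u v) 0)"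

text \<open>The components (h)_1 and (h)_2 (a representative of them).\<close>
definition proj1 :: "nat \<Rightarrow> ('a \<Rightarrow> 'a \<Rightarrow> bool) \<Rightarrow> ('a,'r::comm_ring_1) nael set \<Rightarrow> ('a,'r) nael set \<Rightarrow> ('a,'r) nael \<Rightarrow> ('a,'r) nael" where
  "proj1 m E L1 L2 h = (SOME u. u \<in> L1 \<and> (\<exists>v\<in>L2. Neq m E h (u + v)))"

definition proj2 :: "nat \<Rightarrow> ('a \<Rightarrow> 'a \<Rightarrow> bool) \<Rightarrow> ('a,'r::comm_ring_1) nael set \<Rightarrow> ('a,'r) nael set \<Rightarrow> ('a,'r) nael \<Rightarrow> ('a,'r) nael" where
  "proj2 m E L1 L2 h = (SOME v. v \<in> L2 \<and> (\<exists>u\<in>L1. Neq m E h (u + v)))"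

text \<open>Homogeneous components (well defined modulo lideal, which is multi-homogeneous).\<close>
definition mcomp :: "('a \<Rightarrow> nat) \<Rightarrow> ('a,'r::comm_ring_1) nael \<Rightarrow> ('a,'r) nael" where
  "mcomp d h = Poly_Mapping.mapp (\<lambda>t c. if mdeg t = d then c else 0) h"

definition omega :: "nat \<Rightarrow> ('a,'r::comm_ring_1) nael \<Rightarrow> ('a,'r) nael" where
  "omega k h = Poly_Mapping.mapp (\<lambda>t c. if tlen t = k then c else 0) h"

definition Ocomp :: "nat \<Rightarrow> ('a,'r::comm_ring_1) nael \<Rightarrow> ('a,'r) nael" where
  "Ocomp k h = (\<Sum>j\<in>{1..k}. omega j h)"

definition Nsupp :: "nat \<Rightarrow> ('a \<Rightarrow> 'a \<Rightarrow> bool) \<Rightarrow> ('a,'r::comm_ring_1) nael \<Rightarrow> 'a set" where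
  "Nsupp m E h = {p. \<exists>d. \<not> Neq m E (mcomp d h) 0 \<and> d p > 0}"

definition compl_connected :: "('a \<Rightarrow> 'a \<Rightarrow> bool) \<Rightarrow> bool" where
  "compl_connected E \<longleftrightarrow> (\<forall>p q. (\<lambda>x y. x \<noteq> y \<and> \<not> E x y)\<^sup>*\<^sup>* p q)"

end

(* Write c(j,q) for the coefficient of a_q in g_j.  In N_m(A;G) the elements a_i + g_i of L_1 and
   g_j commute, and for non-adjacent a_i, a_q the antisymmetrised coefficient of [a_i,a_q] vanishes
   on the defining ideal.  For a non-neighbour q of i, which exists because the complement of G is
   connected and n >= 2, this gives c(j,q) = c(i,q) c(j,i), using c(i,i) = 0; taking j = i yields
   c(i,q) = 0, hence every c(j,q) vanishes.

   So the L_2-components -g_p of the generators have no linear part.  The substitution a_p -> -g_p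
   is, modulo the ideal, the projection onto L_2 (the cross terms die since [L_1,L_2] = 0): it fixes
   every -g_p and at least doubles the degree of anything without linear part.  Hence -g_p lies in
   every term of the lower central series, so g_p = 0 in N_m(A;G), and so are all its homogeneous
   components because the defining ideal is graded. *)

theory Submission
  imports Defs
begin

lemma lookup_smul [simp]: "Poly_Mapping.lookup (smul c x) t = c * Poly_Mapping.lookup x t"
  by (simp add: smul_def Poly_Mapping.map.rep_eq when_def)

lemma lookup_gen: "Poly_Mapping.lookup (gen a) t = (if t = Leaf a then 1 else 0)"
  by (simp add: gen_def lookup_single when_def)

lemma lookup_br_Leaf [simp]: "Poly_Mapping.lookup (br x y) (Leaf a) = 0"
  by (simp add: br_def lookup_sum lookup_single when_def)

lemma lookup_br_Br [simp]:
  "Poly_Mapping.lookup (br x y) (Br s u) = Poly_Mapping.lookup x s * Poly_Mapping.lookup y u"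
proof -
  have "Poly_Mapping.lookup (br x y) (Br s u) =
      (\<Sum>s'\<in>Poly_Mapping.keys x. \<Sum>u'\<in>Poly_Mapping.keys y.
         if s' = s \<and> u' = u then Poly_Mapping.lookup x s' * Poly_Mapping.lookup y u' else 0)"
    by (simp add: br_def lookup_sum lookup_single when_def)
  also have "\<dots> = (\<Sum>s'\<in>Poly_Mapping.keys x. if s' = s then
         (\<Sum>u'\<in>Poly_Mapping.keys y. if u' = u then Poly_Mapping.lookup x s' * Poly_Mapping.lookup y u' else 0)
       else 0)"
    by (rule sum.cong) auto
  also have "\<dots> = Poly_Mapping.lookup x s * Poly_Mapping.lookup y u"
    by (simp add: in_keys_iff)
  finally show ?thesis .
qed

lemma poly_mapping_ltree_eqI:
  assumes "\<And>a. Poly_Mapping.lookup x (Leaf a) = Poly_Mapping.lookup y (Leaf a)"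
    and "\<And>s u. Poly_Mapping.lookup x (Br s u) = Poly_Mapping.lookup y (Br s u)"
  shows "x = y"
proof (rule poly_mapping_eqI)
  show "Poly_Mapping.lookup x t = Poly_Mapping.lookup y t" for t
    using assms by (cases t) simp_all
qed

lemma br_add_left: "br (x + y) z = br x z + br y z"
  by (rule poly_mapping_ltree_eqI) (simp_all add: lookup_add algebra_simps)

lemma br_add_right: "br z (x + y) = br z x + br z y"
  by (rule poly_mapping_ltree_eqI) (simp_all add: lookup_add algebra_simps)

lemma br_diff_left: "br (x - y) z = br x z - br y z"
  by (rule poly_mapping_ltree_eqI) (simp_all add: lookup_minus algebra_simps)

lemma br_diff_right: "br z (x - y) = br z x - br z y"
  by (rule poly_mapping_ltree_eqI) (simp_all add: lookup_minus algebra_simps)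

lemma br_zero_left [simp]: "br 0 z = 0"
  by (rule poly_mapping_ltree_eqI) simp_all

lemma br_zero_right [simp]: "br z 0 = 0"
  by (rule poly_mapping_ltree_eqI) simp_all

lemma br_uminus_right: "br z (- x) = - br z x"
  by (rule poly_mapping_ltree_eqI) simp_all

lemma br_sum_left: "br (sum f A) z = (\<Sum>i\<in>A. br (f i) z)"
  by (induction A rule: infinite_finite_induct) (simp_all add: br_add_left)

lemma br_sum_right: "br z (sum f A) = (\<Sum>i\<in>A. br z (f i))"
  by (induction A rule: infinite_finite_induct) (simp_all add: br_add_right)

lemma br_single_single:
  "br (Poly_Mapping.single s 1) (Poly_Mapping.single u 1) = Poly_Mapping.single (Br s u) (1::'r::comm_ring_1)"
  by (rule poly_mapping_ltree_eqI) (simp_all add: lookup_single when_def)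

lemma keys_br: "t \<in> Poly_Mapping.keys (br x y) \<Longrightarrow>
    \<exists>s u. t = Br s u \<and> s \<in> Poly_Mapping.keys x \<and> u \<in> Poly_Mapping.keys y"
  by (cases t) (auto simp: in_keys_iff)

lemma smul_add: "smul c (x + y) = smul c x + smul c y"
  by (rule poly_mapping_eqI) (simp add: lookup_add algebra_simps)

lemma smul_diff: "smul c (x - y) = smul c x - smul c y"
  by (rule poly_mapping_eqI) (simp add: lookup_minus algebra_simps)

lemma smul_minus_one: "smul (-1) x = - x"
  by (rule poly_mapping_eqI) simp

lemma keys_smul: "Poly_Mapping.keys (smul c x) \<subseteq> Poly_Mapping.keys x"
  by (auto simp: in_keys_iff)

lemma sum_smul_single_keys:
  "(\<Sum>t\<in>Poly_Mapping.keys x. smul (Poly_Mapping.lookup x t) (Poly_Mapping.single t 1)) = x"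
proof (rule poly_mapping_eqI)
  fix k
  have "Poly_Mapping.lookup (\<Sum>t\<in>Poly_Mapping.keys x. smul (Poly_Mapping.lookup x t) (Poly_Mapping.single t 1)) k
      = (\<Sum>t\<in>Poly_Mapping.keys x. if t = k then Poly_Mapping.lookup x t else 0)"
    by (simp add: lookup_sum lookup_single when_def if_distrib cong: if_cong)
  also have "\<dots> = Poly_Mapping.lookup x k"
    by (simp add: in_keys_iff)
  finally show "Poly_Mapping.lookup (\<Sum>t\<in>Poly_Mapping.keys x. smul (Poly_Mapping.lookup x t) (Poly_Mapping.single t 1)) k
      = Poly_Mapping.lookup x k" .
qed

lemma tlen_pos: "1 \<le> tlen t"
  by (induction t) simp_all

lemma two_le_tlen_if_no_Leaf:
  assumes "\<And>p. Poly_Mapping.lookup x (Leaf p) = 0" and "t \<in> Poly_Mapping.keys x"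
  shows "2 \<le> tlen t"
proof (cases t)
  case (Leaf p)
  then show ?thesis
    using assms by (simp add: in_keys_iff)
next
  case (Br s u)
  then show ?thesis
    using tlen_pos[of s] tlen_pos[of u] by simp
qed

lemma lideal_uminus: "x \<in> lideal m E \<Longrightarrow> - x \<in> lideal m E"
  by (metis lideal.smul smul_minus_one)

lemma lideal_diff: "x \<in> lideal m E \<Longrightarrow> y \<in> lideal m E \<Longrightarrow> x - y \<in> lideal m E"
  by (metis lideal.add lideal_uminus diff_conv_add_uminus)

lemma lideal_sum: "(\<And>i. i \<in> A \<Longrightarrow> f i \<in> lideal m E) \<Longrightarrow> sum f A \<in> lideal m E"
  by (induction A rule: infinite_finite_induct) (auto intro: lideal.intros)

lemma lideal_anticomm: "br x y + br y x \<in> lideal m E"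
proof -
  have "br x y + br y x = br (x + y) (x + y) - br x x - br y y"
    by (simp add: br_add_left br_add_right algebra_simps)
  then show ?thesis
    by (metis lideal_diff lideal.alt)
qed

lemma lideal_lookup_Leaf:
  assumes "1 \<le> m" and "x \<in> lideal m E"
  shows "Poly_Mapping.lookup x (Leaf p) = 0"
  using assms(2)
proof (induction rule: lideal.induct)
  case (nil t)
  then show ?case
    using assms(1) by (auto simp: lookup_single when_def)
qed (simp_all add: lookup_add lookup_gen)

lemma lideal_lookup_Br_Leaf_sym:
  assumes "2 \<le> m" and sym: "\<And>p q. E p q \<Longrightarrow> E q p" and "\<not> E p q" and "x \<in> lideal m E"
  shows "Poly_Mapping.lookup x (Br (Leaf p) (Leaf q)) = Poly_Mapping.lookup x (Br (Leaf q) (Leaf p))"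
  using assms(4)
proof (induction rule: lideal.induct)
  case (nil t)
  then have "t \<noteq> Br (Leaf p) (Leaf q)" "t \<noteq> Br (Leaf q) (Leaf p)"
    using assms(1) by auto
  then show ?case
    by (simp add: lookup_single when_def)
next
  case (rel p' q')
  then show ?case
    using sym \<open>\<not> E p q\<close> by (auto simp: lookup_gen)
next
  case (brl x y)
  then show ?case
    using assms(1) lideal_lookup_Leaf[of m x E] by simp
next
  case (brr x y)
  then show ?case
    using assms(1) lideal_lookup_Leaf[of m x E] by simp
qed (simp_all add: lookup_add mult.commute)

section \<open>The defining ideal is graded\<close>

definition homog :: "nat \<Rightarrow> ('a,'r::comm_ring_1) nael \<Rightarrow> bool" where
  "homog d x \<longleftrightarrow> (\<forall>t\<in>Poly_Mapping.keys x. tlen t = d)"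

lemma lookup_omega:
  "Poly_Mapping.lookup (omega k x) t = (if tlen t = k then Poly_Mapping.lookup x t else 0)"
  by (simp add: omega_def lookup_mapp when_def in_keys_iff)

lemma omega_homog: "homog d x \<Longrightarrow> omega k x = (if k = d then x else 0)"
  by (rule poly_mapping_eqI) (auto simp: homog_def lookup_omega in_keys_iff)

lemma omega_zero [simp]: "omega k 0 = 0"
  by (rule poly_mapping_eqI) (simp add: lookup_omega)

lemma omega_add: "omega k (x + y) = omega k x + omega k y"
  by (rule poly_mapping_eqI) (simp add: lookup_omega lookup_add)

lemma omega_smul: "omega k (smul c x) = smul c (omega k x)"
  by (rule poly_mapping_eqI) (simp add: lookup_omega)

lemma sum_omega: "(\<Sum>k\<in>tlen ` Poly_Mapping.keys x. omega k x) = x"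
proof (rule poly_mapping_eqI)
  fix t
  have "Poly_Mapping.lookup (\<Sum>k\<in>tlen ` Poly_Mapping.keys x. omega k x) t
      = (\<Sum>k\<in>tlen ` Poly_Mapping.keys x. if k = tlen t then Poly_Mapping.lookup x t else 0)"
    by (auto simp: lookup_sum lookup_omega intro!: sum.cong)
  also have "\<dots> = Poly_Mapping.lookup x t"
    by (auto simp: in_keys_iff)
  finally show "Poly_Mapping.lookup (\<Sum>k\<in>tlen ` Poly_Mapping.keys x. omega k x) t
      = Poly_Mapping.lookup x t" .
qed

lemma homog_omega: "homog k (omega k x)"
  by (auto simp: homog_def in_keys_iff lookup_omega split: if_splits)

lemma homog_single: "homog (tlen t) (Poly_Mapping.single t c)"
  by (auto simp: homog_def in_keys_iff lookup_single when_def split: if_splits)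

lemma homog_gen: "homog 1 (gen p)"
  using homog_single[of "Leaf p" 1] by (simp add: gen_def)

lemma homog_add: "homog d x \<Longrightarrow> homog d y \<Longrightarrow> homog d (x + y)"
  unfolding homog_def by (meson Un_iff keys_add subsetD)

lemma homog_br: "homog d x \<Longrightarrow> homog e y \<Longrightarrow> homog (d + e) (br x y)"
  unfolding homog_def by (metis keys_br tlen.simps(2))

definition jacobiator :: "('a,'r::comm_ring_1) nael \<Rightarrow> ('a,'r) nael \<Rightarrow> ('a,'r) nael \<Rightarrow> ('a,'r) nael" where
  "jacobiator x y z = br x (br y z) + br y (br z x) + br z (br x y)"

lemma jacobiator_cycle: "jacobiator x y z = jacobiator y z x"
  by (simp add: jacobiator_def algebra_simps)

lemma jacobiator_sum_omega:
  "jacobiator x y z = (\<Sum>i\<in>tlen ` Poly_Mapping.keys x. jacobiator y z (omega i x))"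
proof -
  have "jacobiator x y z = (\<Sum>i\<in>tlen ` Poly_Mapping.keys x. jacobiator (omega i x) y z)"
    by (subst (1) sum_omega[symmetric])
      (simp add: jacobiator_def br_sum_left br_sum_right sum.distrib)
  also have "\<dots> = (\<Sum>i\<in>tlen ` Poly_Mapping.keys x. jacobiator y z (omega i x))"
    by (intro sum.cong refl jacobiator_cycle)
  finally show ?thesis .
qed

lemma homog_jacobiator:
  assumes "homog a x" and "homog b y" and "homog c z"
  shows "homog (a + b + c) (jacobiator x y z)"
proof -
  have "homog (a + (b + c)) (br x (br y z))" and "homog (b + (c + a)) (br y (br z x))"
    and "homog (c + (a + b)) (br z (br x y))"
    using assms by (blast intro: homog_br)+
  then show ?thesis
    unfolding jacobiator_def by (simp add: homog_add ac_simps)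
qed

definition graded_lideal :: "nat \<Rightarrow> ('a \<Rightarrow> 'a \<Rightarrow> bool) \<Rightarrow> ('a,'r::comm_ring_1) nael set" where
  "graded_lideal m E = {x. \<forall>k. omega k x \<in> lideal m E}"

lemma graded_lideal_add:
  "x \<in> graded_lideal m E \<Longrightarrow> y \<in> graded_lideal m E \<Longrightarrow> x + y \<in> graded_lideal m E"
  by (simp add: graded_lideal_def omega_add lideal.add)

lemma graded_lideal_sum:
  "(\<And>i. i \<in> A \<Longrightarrow> f i \<in> graded_lideal m E) \<Longrightarrow> sum f A \<in> graded_lideal m E"
proof (induction A rule: infinite_finite_induct)
  case (insert a A)
  then show ?case
    by (simp add: graded_lideal_add)
qed (simp_all add: graded_lideal_def lideal.zero)

lemma homog_lideal_in_graded_lideal: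
  "homog d x \<Longrightarrow> x \<in> lideal m E \<Longrightarrow> x \<in> graded_lideal m E"
  by (simp add: graded_lideal_def omega_homog lideal.zero)

text \<open>For inhomogeneous elements the alternating law holds degreewise only thanks to the
  anticommutativity of the homogeneous parts.\<close>

lemma br_self_sum_homog_in_graded_lideal:
  assumes "finite A" and "\<And>i. i \<in> A \<Longrightarrow> \<exists>d. homog d (f i)"
  shows "br (sum f A) (sum f A) \<in> graded_lideal m E"
  using assms
proof (induction A rule: finite_induct)
  case empty
  then show ?case
    by (simp add: graded_lideal_def lideal.zero)
next
  case (insert a A)
  obtain d where d: "homog d (f a)"
    using insert.prems by blast
  have IH: "br (sum f A) (sum f A) \<in> graded_lideal m E"
    using insert.IH insert.prems by blast
  have alt: "br (f a) (f a) \<in> graded_lideal m E"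
    using homog_br[OF d d] lideal.alt by (rule homog_lideal_in_graded_lideal)
  have cross: "br (f a) (f i) + br (f i) (f a) \<in> graded_lideal m E" if i: "i \<in> A" for i
  proof -
    obtain e where e: "homog e (f i)"
      using insert.prems i by blast
    have "homog (d + e) (br (f a) (f i))" and "homog (e + d) (br (f i) (f a))"
      using homog_br d e by blast+
    then have "homog (d + e) (br (f a) (f i) + br (f i) (f a))"
      by (simp add: homog_add add.commute)
    then show ?thesis
      using lideal_anticomm by (rule homog_lideal_in_graded_lideal)
  qed
  have "br (sum f (insert a A)) (sum f (insert a A)) =
      br (f a) (f a) + (br (f a) (sum f A) + br (sum f A) (f a)) + br (sum f A) (sum f A)"
    using insert.hyps by (simp add: br_add_left br_add_right add.assoc)
  also have "br (f a) (sum f A) + br (sum f A) (f a) = (\<Sum>i\<in>A. br (f a) (f i) + br (f i) (f a))"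
    by (simp add: br_sum_left br_sum_right sum.distrib)
  also have "br (f a) (f a) + (\<Sum>i\<in>A. br (f a) (f i) + br (f i) (f a)) + br (sum f A) (sum f A)
      \<in> graded_lideal m E"
    using alt IH graded_lideal_sum[OF cross] by (intro graded_lideal_add)
  finally show ?case .
qed

lemma graded_lideal_alt: "br x x \<in> graded_lideal m E"
proof -
  have "br (\<Sum>k\<in>tlen ` Poly_Mapping.keys x. omega k x) (\<Sum>k\<in>tlen ` Poly_Mapping.keys x. omega k x)
      \<in> graded_lideal m E"
    by (rule br_self_sum_homog_in_graded_lideal) (auto intro: homog_omega)
  then show ?thesis
    by (simp only: sum_omega)
qed

lemma graded_lideal_jacobiator: "jacobiator x y z \<in> graded_lideal m E"
proof -
  let ?X = "tlen ` Poly_Mapping.keys x" and ?Y = "tlen ` Poly_Mapping.keys y"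
    and ?Z = "tlen ` Poly_Mapping.keys z"
  have "jacobiator x y z =
      (\<Sum>i\<in>?X. \<Sum>j\<in>?Y. \<Sum>k\<in>?Z. jacobiator (omega i x) (omega j y) (omega k z))"
    by (simp only: jacobiator_sum_omega[of x] jacobiator_sum_omega[of y] jacobiator_sum_omega[of z])
  also have "\<dots> \<in> graded_lideal m E"
  proof (intro graded_lideal_sum)
    fix i j k
    have "jacobiator (omega i x) (omega j y) (omega k z) \<in> lideal m E"
      unfolding jacobiator_def by (rule lideal.jac)
    then show "jacobiator (omega i x) (omega j y) (omega k z) \<in> graded_lideal m E"
      by (rule homog_lideal_in_graded_lideal[OF homog_jacobiator[OF homog_omega homog_omega homog_omega]])
  qed
  finally show ?thesis .
qed

lemma graded_lideal_brI:
  assumes "\<And>i j. br (omega i x) (omega j y) \<in> lideal m E"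
  shows "br x y \<in> graded_lideal m E"
proof -
  have "br x y = br (\<Sum>i\<in>tlen ` Poly_Mapping.keys x. omega i x) (\<Sum>j\<in>tlen ` Poly_Mapping.keys y. omega j y)"
    by (simp only: sum_omega)
  also have "\<dots> = (\<Sum>i\<in>tlen ` Poly_Mapping.keys x. \<Sum>j\<in>tlen ` Poly_Mapping.keys y. br (omega i x) (omega j y))"
    by (simp add: br_sum_left br_sum_right sum.swap[of _ "tlen ` Poly_Mapping.keys x"])
  also have "\<dots> \<in> graded_lideal m E"
    using assms by (intro graded_lideal_sum homog_lideal_in_graded_lideal[OF homog_br[OF homog_omega homog_omega]])
  finally show ?thesis .
qed

lemma lideal_in_graded_lideal: "x \<in> lideal m E \<Longrightarrow> x \<in> graded_lideal m E"
proof (induction rule: lideal.induct)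
  case (alt x)
  show ?case
    by (rule graded_lideal_alt)
next
  case (jac x y z)
  show ?case
    using graded_lideal_jacobiator[of x y z] by (simp only: jacobiator_def)
next
  case (nil t)
  then show ?case
    by (intro homog_lideal_in_graded_lideal[OF homog_single] lideal.nil)
next
  case (rel p q)
  then show ?case
    by (intro homog_lideal_in_graded_lideal[OF homog_br[OF homog_gen homog_gen]] lideal.rel)
next
  case zero
  show ?case
    by (simp add: graded_lideal_def lideal.zero)
next
  case (add x y)
  from add.IH show ?case
    by (rule graded_lideal_add)
next
  case (smul x c)
  from smul.IH show ?case
    by (simp add: graded_lideal_def omega_smul lideal.smul)
next
  case (brl x y)
  from brl.IH show ?case
    by (intro graded_lideal_brI) (simp add: graded_lideal_def lideal.brl)
next
  case (brr x y)
  from brr.IH show ?case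
    by (intro graded_lideal_brI) (simp add: graded_lideal_def lideal.brr)
qed

lemma lideal_omega: "x \<in> lideal m E \<Longrightarrow> omega k x \<in> lideal m E"
  using lideal_in_graded_lideal by (auto simp: graded_lideal_def)

section \<open>Direct sums of subalgebras\<close>

lemma Nsubalg_Neq: "Nsubalg m E S \<Longrightarrow> x \<in> S \<Longrightarrow> Neq m E x y \<Longrightarrow> y \<in> S"
  by (auto simp: Nsubalg_def)

lemma Nsubalg_add: "Nsubalg m E S \<Longrightarrow> x \<in> S \<Longrightarrow> y \<in> S \<Longrightarrow> x + y \<in> S"
  by (auto simp: Nsubalg_def)

lemma Nsubalg_br: "Nsubalg m E S \<Longrightarrow> x \<in> S \<Longrightarrow> y \<in> S \<Longrightarrow> br x y \<in> S"
  by (auto simp: Nsubalg_def)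

lemma Nsubalg_smul: "Nsubalg m E S \<Longrightarrow> x \<in> S \<Longrightarrow> smul c x \<in> S"
  by (auto simp: Nsubalg_def)

lemma Nsubalg_diff: "Nsubalg m E S \<Longrightarrow> x \<in> S \<Longrightarrow> y \<in> S \<Longrightarrow> x - y \<in> S"
  by (metis Nsubalg_add Nsubalg_smul smul_minus_one diff_conv_add_uminus)

lemma Nsubalg_sum: "Nsubalg m E S \<Longrightarrow> (\<And>i. i \<in> A \<Longrightarrow> f i \<in> S) \<Longrightarrow> sum f A \<in> S"
  by (induction A rule: infinite_finite_induct) (auto simp: Nsubalg_def)

lemma Ndirect_sumD:
  assumes "Ndirect_sum m E L1 L2"
  shows "Nsubalg m E L1" and "Nsubalg m E L2"
    and "\<And>x. x \<in> L1 \<Longrightarrow> x \<in> L2 \<Longrightarrow> x \<in> lideal m E"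
    and "\<And>u v. u \<in> L1 \<Longrightarrow> v \<in> L2 \<Longrightarrow> br u v \<in> lideal m E"
  using assms by (auto simp: Ndirect_sum_def Neq_def)

lemma proj1_mem:
  assumes "Ndirect_sum m E L1 L2"
  shows "proj1 m E L1 L2 h \<in> L1"
proof -
  have "\<exists>u. u \<in> L1 \<and> (\<exists>v\<in>L2. Neq m E h (u + v))"
    using assms unfolding Ndirect_sum_def by blast
  then show ?thesis
    unfolding proj1_def by (rule someI2_ex) simp
qed

lemma proj2_mem:
  assumes "Ndirect_sum m E L1 L2"
  shows "proj2 m E L1 L2 h \<in> L2"
proof -
  have "\<exists>v. v \<in> L2 \<and> (\<exists>u\<in>L1. Neq m E h (u + v))"
    using assms unfolding Ndirect_sum_def by blast
  then show ?thesis
    unfolding proj2_def by (rule someI2_ex) simp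
qed

fun subst_tree :: "('a \<Rightarrow> ('a,'r::comm_ring_1) nael) \<Rightarrow> 'a ltree \<Rightarrow> ('a,'r) nael" where
  "subst_tree \<sigma> (Leaf p) = \<sigma> p"
| "subst_tree \<sigma> (Br s t) = br (subst_tree \<sigma> s) (subst_tree \<sigma> t)"

definition subst :: "('a \<Rightarrow> ('a,'r::comm_ring_1) nael) \<Rightarrow> ('a,'r) nael \<Rightarrow> ('a,'r) nael" where
  "subst \<sigma> x = (\<Sum>t\<in>Poly_Mapping.keys x. smul (Poly_Mapping.lookup x t) (subst_tree \<sigma> t))"

lemma subst_tree_split:
  assumes sum: "Ndirect_sum m E L1 L2"
    and P: "\<And>p. P p \<in> L1" and Q: "\<And>p. Q p \<in> L2"
    and gen: "\<And>p. Neq m E (gen p) (P p + Q p)"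
  shows "subst_tree P t \<in> L1 \<and> subst_tree Q t \<in> L2 \<and>
    Neq m E (Poly_Mapping.single t 1) (subst_tree P t + subst_tree Q t)"
proof (induction t)
  case (Leaf p)
  then show ?case
    using P Q gen by (simp add: gen_def)
next
  case (Br s u)
  let ?s = "Poly_Mapping.single s (1::'b)" and ?u = "Poly_Mapping.single u (1::'b)"
  let ?Ps = "subst_tree P s" and ?Qs = "subst_tree Q s"
    and ?Pu = "subst_tree P u" and ?Qu = "subst_tree Q u"
  \<comment> \<open>the mixed products vanish because the two summands commute\<close>
  have "Poly_Mapping.single (Br s u) 1 - (subst_tree P (Br s u) + subst_tree Q (Br s u)) =
      br (?s - (?Ps + ?Qs)) ?u + br (?Ps + ?Qs) (?u - (?Pu + ?Qu)) + br ?Ps ?Qu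
      + (br ?Qs ?Pu + br ?Pu ?Qs) - br ?Pu ?Qs"
    by (simp flip: br_single_single add: br_add_left br_add_right br_diff_left br_diff_right
        algebra_simps)
  also have "\<dots> \<in> lideal m E"
  proof -
    have "br (?s - (?Ps + ?Qs)) ?u \<in> lideal m E" and "br (?Ps + ?Qs) (?u - (?Pu + ?Qu)) \<in> lideal m E"
      using Br by (auto simp: Neq_def intro: lideal.brl lideal.brr)
    moreover have "br ?Ps ?Qu \<in> lideal m E" and "br ?Pu ?Qs \<in> lideal m E"
      using Br Ndirect_sumD(4)[OF sum] by auto
    ultimately show ?thesis
      by (intro lideal_anticomm lideal_diff lideal.add)
  qed
  finally show ?case
    using Br Ndirect_sumD(1,2)[OF sum] by (auto simp: Neq_def intro: Nsubalg_br)
qed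

lemma subst_split:
  assumes sum: "Ndirect_sum m E L1 L2"
    and P: "\<And>p. P p \<in> L1" and Q: "\<And>p. Q p \<in> L2"
    and gen: "\<And>p. Neq m E (gen p) (P p + Q p)"
  shows "subst P x \<in> L1" and "subst Q x \<in> L2" and "Neq m E x (subst P x + subst Q x)"
proof -
  note tree = subst_tree_split[OF sum P Q gen]
  show "subst P x \<in> L1" and "subst Q x \<in> L2"
    unfolding subst_def using tree Ndirect_sumD(1,2)[OF sum]
    by (auto intro!: Nsubalg_sum Nsubalg_smul)
  have "x - (subst P x + subst Q x) = (\<Sum>t\<in>Poly_Mapping.keys x. smul (Poly_Mapping.lookup x t)
      (Poly_Mapping.single t 1 - (subst_tree P t + subst_tree Q t)))"
    by (subst (1) sum_smul_single_keys[symmetric])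
      (simp add: subst_def smul_diff smul_add sum_subtractf sum.distrib)
  also have "\<dots> \<in> lideal m E"
    using tree by (intro lideal_sum lideal.smul) (auto simp: Neq_def)
  finally show "Neq m E x (subst P x + subst Q x)"
    by (simp add: Neq_def)
qed

lemma subst_fixes_second_summand:
  assumes sum: "Ndirect_sum m E L1 L2"
    and P: "\<And>p. P p \<in> L1" and Q: "\<And>p. Q p \<in> L2"
    and gen: "\<And>p. Neq m E (gen p) (P p + Q p)"
    and "x \<in> L2"
  shows "Neq m E x (subst Q x)"
proof -
  note split = subst_split[OF sum P Q gen, of x]
  have in_L2: "x - subst Q x \<in> L2"
    using split(2) assms(5) Ndirect_sumD(2)[OF sum] by (blast intro: Nsubalg_diff)
  have "subst P x - (x - subst Q x) \<in> lideal m E"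
    using lideal_uminus[of "x - (subst P x + subst Q x)"] split(3)
    by (simp add: Neq_def algebra_simps)
  then have in_L1: "x - subst Q x \<in> L1"
    using Nsubalg_Neq[OF Ndirect_sumD(1)[OF sum] split(1)] by (simp add: Neq_def)
  show ?thesis
    using Ndirect_sumD(3)[OF sum in_L1 in_L2] by (simp add: Neq_def)
qed

section \<open>The lower central series\<close>

text \<open>\<open>lcs m E k\<close> is the term \<open>\<gamma>\<^sub>k\<close> of the lower central series of \<open>\<N>\<^sub>m(A;G)\<close>, as the set
  of representatives congruent to a combination of monomials of length at least \<open>k\<close>.\<close>

definition lcs :: "nat \<Rightarrow> ('a \<Rightarrow> 'a \<Rightarrow> bool) \<Rightarrow> nat \<Rightarrow> ('a,'r::comm_ring_1) nael set" where
  "lcs m E k = {x. \<exists>y\<in>lideal m E. \<forall>t\<in>Poly_Mapping.keys (x - y). k \<le> tlen t}"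

lemma lcs_memI:
  "y \<in> lideal m E \<Longrightarrow> (\<And>t. t \<in> Poly_Mapping.keys (x - y) \<Longrightarrow> k \<le> tlen t) \<Longrightarrow> x \<in> lcs m E k"
  unfolding lcs_def by blast

lemma lcsE:
  assumes "x \<in> lcs m E k"
  obtains y where "y \<in> lideal m E" and "\<forall>t\<in>Poly_Mapping.keys (x - y). k \<le> tlen t"
  using assms unfolding lcs_def by blast

lemma lcsI: "(\<And>t. t \<in> Poly_Mapping.keys x \<Longrightarrow> k \<le> tlen t) \<Longrightarrow> x \<in> lcs m E k"
  by (rule lcs_memI[OF lideal.zero]) simp

lemma lcs_antimono:
  assumes "x \<in> lcs m E k" and "j \<le> k"
  shows "x \<in> lcs m E j"
proof -
  obtain y where "y \<in> lideal m E" and "\<forall>t\<in>Poly_Mapping.keys (x - y). k \<le> tlen t"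
    using assms(1) by (rule lcsE)
  then show ?thesis
    using assms(2) by (intro lcs_memI[of y]) auto
qed

lemma lcs_Neq:
  assumes "x' \<in> lcs m E k" and "Neq m E x x'"
  shows "x \<in> lcs m E k"
proof -
  obtain y where y: "y \<in> lideal m E" "\<forall>t\<in>Poly_Mapping.keys (x' - y). k \<le> tlen t"
    using assms(1) by (rule lcsE)
  have "x - (y + (x - x')) = x' - y"
    by simp
  then show ?thesis
    using y assms(2) by (intro lcs_memI[of "y + (x - x')"]) (simp_all add: Neq_def lideal.add)
qed

lemma lcs_add:
  assumes "x \<in> lcs m E k" and "y \<in> lcs m E k"
  shows "x + y \<in> lcs m E k"
proof -
  obtain a where a: "a \<in> lideal m E" "\<forall>t\<in>Poly_Mapping.keys (x - a). k \<le> tlen t"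
    using assms(1) by (rule lcsE)
  obtain b where b: "b \<in> lideal m E" "\<forall>t\<in>Poly_Mapping.keys (y - b). k \<le> tlen t"
    using assms(2) by (rule lcsE)
  have "Poly_Mapping.keys (x + y - (a + b)) \<subseteq> Poly_Mapping.keys (x - a) \<union> Poly_Mapping.keys (y - b)"
    using keys_add[of "x - a" "y - b"] by (simp add: algebra_simps)
  then show ?thesis
    using a b by (intro lcs_memI[of "a + b"] lideal.add) auto
qed

lemma lcs_smul:
  assumes "x \<in> lcs m E k"
  shows "smul c x \<in> lcs m E k"
proof -
  obtain a where a: "a \<in> lideal m E" "\<forall>t\<in>Poly_Mapping.keys (x - a). k \<le> tlen t"
    using assms by (rule lcsE)
  have "Poly_Mapping.keys (smul c x - smul c a) \<subseteq> Poly_Mapping.keys (x - a)"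
    using keys_smul[of c "x - a"] by (simp add: smul_diff)
  then show ?thesis
    using a by (intro lcs_memI[of "smul c a"] lideal.smul) auto
qed

lemma lcs_sum: "(\<And>i. i \<in> A \<Longrightarrow> f i \<in> lcs m E k) \<Longrightarrow> sum f A \<in> lcs m E k"
  by (induction A rule: infinite_finite_induct) (auto intro: lcs_add lcsI)

lemma lcs_br:
  assumes "x \<in> lcs m E j" and "y \<in> lcs m E k"
  shows "br x y \<in> lcs m E (j + k)"
proof -
  obtain a where a: "a \<in> lideal m E" "\<forall>t\<in>Poly_Mapping.keys (x - a). j \<le> tlen t"
    using assms(1) by (rule lcsE)
  obtain b where b: "b \<in> lideal m E" "\<forall>t\<in>Poly_Mapping.keys (y - b). k \<le> tlen t"
    using assms(2) by (rule lcsE)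
  have "br x y - (br a y + br (x - a) b) = br (x - a) (y - b)"
    by (simp add: br_diff_left br_diff_right)
  moreover have "j + k \<le> tlen t" if "t \<in> Poly_Mapping.keys (br (x - a) (y - b))" for t
    using that a(2) b(2) by (fastforce dest!: keys_br intro: add_mono)
  ultimately show ?thesis
    using a(1) b(1) by (intro lcs_memI[of "br a y + br (x - a) b"] lideal.add lideal.brl lideal.brr) auto
qed

lemma lcs_Suc_in_lideal:
  assumes "x \<in> lcs m E (Suc m)"
  shows "x \<in> lideal m E"
proof -
  obtain y where y: "y \<in> lideal m E" "\<forall>t\<in>Poly_Mapping.keys (x - y). Suc m \<le> tlen t"
    using assms by (rule lcsE)
  have "x - y \<in> lideal m E"
    using y(2) by (subst sum_smul_single_keys[symmetric]) (auto intro!: lideal_sum lideal.smul lideal.nil)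
  then show ?thesis
    using y(1) lideal.add by fastforce
qed

lemma subst_tree_lcs: "(\<And>p. \<sigma> p \<in> lcs m E k) \<Longrightarrow> subst_tree \<sigma> t \<in> lcs m E (k * tlen t)"
  by (induction t) (auto simp: distrib_left intro: lcs_br)

lemma subst_lcs:
  assumes "\<And>p. \<sigma> p \<in> lcs m E k" and "\<And>t. t \<in> Poly_Mapping.keys x \<Longrightarrow> j \<le> tlen t"
  shows "subst \<sigma> x \<in> lcs m E (k * j)"
  unfolding subst_def
proof (intro lcs_sum lcs_smul)
  fix t
  assume "t \<in> Poly_Mapping.keys x"
  have "subst_tree \<sigma> t \<in> lcs m E (k * tlen t)"
    using assms(1) by (rule subst_tree_lcs)
  then show "subst_tree \<sigma> t \<in> lcs m E (k * j)"
    by (rule lcs_antimono) (simp add: assms(2) \<open>t \<in> Poly_Mapping.keys x\<close>)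
qed

text \<open>If the second components \<open>Q p\<close> of the generators have no linear part, then substituting
  \<open>Q\<close> into \<open>Q p\<close> at least doubles its degree; but \<open>Q p \<in> L\<^sub>2\<close> is fixed by this substitution,
  so \<open>Q p\<close> lies arbitrarily deep in the lower central series.\<close>

lemma nonlinear_second_components_vanish:
  assumes sum: "Ndirect_sum m E L1 L2"
    and P: "\<And>p. P p \<in> L1" and Q: "\<And>p. Q p \<in> L2"
    and gen: "\<And>p. Neq m E (gen p) (P p + Q p)"
    and nonlinear: "\<And>p t. t \<in> Poly_Mapping.keys (Q p) \<Longrightarrow> 2 \<le> tlen t"
  shows "Q p \<in> lideal m E"
proof -
  have "Q p \<in> lcs m E (Suc n)" for n p
  proof (induction n arbitrary: p)
    case 0
    show ?case
      using tlen_pos by (intro lcsI) simp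
  next
    case (Suc n)
    have "subst Q (Q p) \<in> lcs m E (Suc n * 2)"
      using Suc.IH nonlinear by (rule subst_lcs)
    then have "subst Q (Q p) \<in> lcs m E (Suc (Suc n))"
      by (rule lcs_antimono) simp
    then show ?case
      using subst_fixes_second_summand[OF sum P Q gen Q] by (rule lcs_Neq)
  qed
  then show ?thesis
    by (rule lcs_Suc_in_lideal)
qed

section \<open>Vanishing of the linear parts\<close>

lemma compl_connected_nonadjacent:
  fixes E :: "'a \<Rightarrow> 'a \<Rightarrow> bool"
  assumes "compl_connected E" and "2 \<le> card (UNIV :: 'a set)"
  shows "\<exists>i. i \<noteq> q \<and> \<not> E i q"
proof -
  have "finite (UNIV :: 'a set)"
    using assms(2) by (intro card_ge_0_finite) simp
  moreover have "\<not> card (UNIV :: 'a set) \<le> Suc 0"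
    using assms(2) by simp
  ultimately obtain r where "r \<noteq> q"
    using card_le_Suc0_iff_eq by (metis (full_types))
  have "(\<lambda>x y. x \<noteq> y \<and> \<not> E x y)\<^sup>*\<^sup>* r q"
    using assms(1) by (simp add: compl_connected_def)
  then show ?thesis
    using \<open>r \<noteq> q\<close> by (cases rule: rtranclp.cases) auto
qed

lemma lookup_Leaf_eq_0_if_notin_Nsupp:
  assumes "1 \<le> m" and "p \<notin> Nsupp m E x"
  shows "Poly_Mapping.lookup x (Leaf p) = 0"
proof -
  have "Neq m E (mcomp (mdeg (Leaf p)) x) 0"
    using assms(2) unfolding Nsupp_def by auto
  then have "Poly_Mapping.lookup (mcomp (mdeg (Leaf p)) x) (Leaf p) = 0"
    using lideal_lookup_Leaf[OF assms(1)] by (simp add: Neq_def)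
  then show ?thesis
    by (simp add: mcomp_def lookup_mapp when_def in_keys_iff split: if_splits)
qed

lemma linear_coeffs_vanish:
  assumes m: "2 \<le> m" and sym: "\<And>p q. E p q \<Longrightarrow> E q p"
    and nonadjacent: "\<And>q. \<exists>i. i \<noteq> q \<and> \<not> E i q"
    and comm: "\<And>i j. br (gen i + g i) (g j) \<in> lideal m E"
    and diag: "\<And>i. Poly_Mapping.lookup (g i) (Leaf i) = 0"
  shows "Poly_Mapping.lookup (g j) (Leaf q) = 0"
proof -
  define c where "c j q = Poly_Mapping.lookup (g j) (Leaf q)" for j q
  \<comment> \<open>compare the coefficients of \<open>[a\<^sub>i, a\<^sub>q]\<close> and \<open>[a\<^sub>q, a\<^sub>i]\<close> in \<open>[a\<^sub>i + g\<^sub>i, g\<^sub>j]\<close>\<close>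
  have wedge: "c j q = c i q * c j i" if "i \<noteq> q" and "\<not> E i q" for i j q
    using lideal_lookup_Br_Leaf_sym[OF m sym that(2) comm[of i j]] that diag[of i]
    by (simp add: lookup_add lookup_gen c_def)
  obtain i where i: "i \<noteq> q" "\<not> E i q"
    using nonadjacent by blast
  have "c i q = 0"
    using wedge[OF i, of i] diag[of i] by (simp add: c_def)
  then show ?thesis
    using wedge[OF i, of j] by (simp add: c_def)
qed

theorem lemma5:
  fixes m :: nat
    and E :: "'a::finite \<Rightarrow> 'a \<Rightarrow> bool"
    and L1 L2 :: "('a, 'r::idom) nael set"
    and g :: "'a \<Rightarrow> ('a, 'r) nael"
  assumes "m \<ge> 2"
    and "card (UNIV :: 'a set) \<ge> 2"
    and "\<And>p. \<not> E p p"
    and "\<And>p q. E p q \<Longrightarrow> E q p"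
    and "compl_connected E"
    and "Ndirect_sum m E L1 L2"
    and "\<And>i. Neq m E (proj1 m E L1 L2 (gen i)) (gen i + g i)"
    and "\<And>i. Neq m E (proj2 m E L1 L2 (gen i)) (- g i)"
    and "\<And>i. i \<notin> Nsupp m E (omega 1 (g i))"
  shows "\<forall>i. Neq m E (Ocomp (m - 1) (g i)) 0"
proof -
  note parts = Ndirect_sumD[OF assms(6)]
  have P: "gen i + g i \<in> L1" for i
    using Nsubalg_Neq[OF parts(1) proj1_mem[OF assms(6)] assms(7)] .
  have Q: "- g i \<in> L2" for i
    using Nsubalg_Neq[OF parts(2) proj2_mem[OF assms(6)] assms(8)] .
  have linear: "Poly_Mapping.lookup (g j) (Leaf q) = 0" for j q
  proof (rule linear_coeffs_vanish[OF assms(1) assms(4)])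
    show "\<exists>i. i \<noteq> q \<and> \<not> E i q" for q
      using assms(5,2) by (rule compl_connected_nonadjacent)
    show "br (gen i + g i) (g j) \<in> lideal m E" for i j
      using lideal_uminus[OF parts(4)[OF P Q]] by (simp add: br_uminus_right)
    show "Poly_Mapping.lookup (g i) (Leaf i) = 0" for i
      using lookup_Leaf_eq_0_if_notin_Nsupp[OF _ assms(9)] assms(1) by (simp add: lookup_omega)
  qed
  have "- g p \<in> lideal m E" for p
  proof (rule nonlinear_second_components_vanish[OF assms(6) P Q])
    show "Neq m E (gen p) (gen p + g p + - g p)" for p
      by (simp add: Neq_def lideal.zero)
    show "2 \<le> tlen t" if "t \<in> Poly_Mapping.keys (- g p)" for p t
      using that by (simp add: two_le_tlen_if_no_Leaf[OF linear])
  qed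
  then have "g p \<in> lideal m E" for p
    using lideal_uminus by fastforce
  then show ?thesis
    unfolding Neq_def Ocomp_def by (auto intro!: lideal_sum lideal_omega)
qed

end
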